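(* Let $c$ be a real number with $2<c<4$. There exists $k(c)$ such that for every integer $k>k(c)$ for which $n=ck$ is an integer, there is an intersecting family $\mathcal F\subset\binom{[n]}{k}$ with $$|\mathcal D(\mathcal F)|>\sum_{0\le \ell<k}\binom{n-1}{\ell}.$$
   Context: $[n]=\{1,\dots,n\}$; $\binom{[n]}{k}$ is the family of all $k$-element subsets of $[n]$. A family $\mathcal F$ is intersecting if $F\cap F'\neq\varnothing$ for all $F,F'\in\mathcal F$. $\mathcal D(\mathcal F):=\{F\setminus F' : F,F'\in\mathcal F\}$. *)

theory Defs
  imports Complex_Main
begin

definition intersecting :: "'a set set \<Rightarrow> bool" where
  "intersecting \<F> \<longleftrightarrow> (\<forall>F\<in>\<F>. \<forall>F'\<in>\<F>. F \<inter> F' \<noteq> {})"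

definition diff_family :: "'a set set \<Rightarrow> 'a set set" where
  "diff_family \<F> = {F - F' | F F'. F \<in> \<F> \<and> F' \<in> \<F>}"

definition k_subsets :: "nat \<Rightarrow> nat \<Rightarrow> nat set set" where
  "k_subsets n k = {A. A \<subseteq> {1..n} \<and> card A = k}"

end

theory Submission
  imports Defs
begin

text \<open>
  Let \<open>T = {2..k+1}\<close>. The Hilton-Milner family \<open>{T} \<union> {S. 1 \<in> S \<and> S \<inter> T \<noteq> {}}\<close> is
  intersecting, and its differences include every subset of \<open>{2..n}\<close> of size less than \<open>k\<close>
  except the \<open>(k-1)\<close>-subsets of \<open>{k+2..n}\<close>, and also every set \<open>insert 1 E\<close> with
  \<open>E \<subseteq> {k+2..n}\<close>, \<open>card E < k - 1\<close>. So with \<open>m = n-k-1\<close> and \<open>t = k-1\<close> it suffices that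
  \<open>m choose t < (\<Sum>l<t. m choose l)\<close>. Here \<open>m - t = (c-2)k\<close> is less than \<open>2t\<close> by a constant
  factor, so for large \<open>k\<close> each of the first \<open>j\<close> ratios \<open>(m choose (s-1)) / (m choose s)\<close>,
  \<open>s \<le> t\<close>, exceeds a fixed \<open>\<rho> > 1/2\<close>; choosing \<open>j\<close> with \<open>\<rho> + \<dots> + \<rho>^j > 1\<close>, these \<open>j\<close>
  coefficients alone outweigh \<open>m choose t\<close>.
\<close>

lemma Suc_mult_choose_Suc: "Suc s * (m choose Suc s) = (m - s) * (m choose s)"
  using binomial_absorb_comp[of m s] binomial_absorption[of s m] by simp

lemma choose_ratio_lower_bound:
  fixes \<rho> :: real
  assumes "0 \<le> \<rho>" and "\<rho> * real (m - s) \<le> real (Suc s)"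
  shows "\<rho> * real (m choose Suc s) \<le> real (m choose s)"
proof (cases "s < m")
  case True
  have "real (m - s) * (\<rho> * real (m choose Suc s)) = \<rho> * real (m - s) * real (m choose Suc s)"
    by (simp only: mult_ac)
  also have "\<dots> \<le> real (Suc s) * real (m choose Suc s)"
    using assms(2) by (rule mult_right_mono) simp
  also have "\<dots> = real (m - s) * real (m choose s)"
    by (metis Suc_mult_choose_Suc of_nat_mult)
  finally show ?thesis
    using True by simp
next
  case False
  then show ?thesis by (simp add: binomial_eq_0)
qed

lemma choose_geometric_lower_bound:
  fixes \<rho> :: real
  assumes "0 \<le> \<rho>" and "i \<le> t"
    and step: "\<And>s. t - i \<le> s \<Longrightarrow> s < t \<Longrightarrow> \<rho> * real (m - s) \<le> real (Suc s)"
  shows "\<rho> ^ i * real (m choose t) \<le> real (m choose (t - i))"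
  using assms(2,3)
proof (induction i)
  case 0
  then show ?case by simp
next
  case (Suc i)
  have "t - i = Suc (t - Suc i)" using Suc.prems(1) by simp
  have "\<rho> ^ Suc i * real (m choose t) \<le> \<rho> * real (m choose (t - i))"
    using Suc by (simp add: assms(1) mult.assoc mult_left_mono)
  also have "\<dots> \<le> real (m choose (t - Suc i))"
    using choose_ratio_lower_bound[OF assms(1) Suc.prems(2)] \<open>t - i = Suc (t - Suc i)\<close>
    using Suc.prems(1) by simp
  finally show ?case .
qed

lemma choose_less_sum_choose_below:
  fixes \<rho> :: real
  assumes "0 \<le> \<rho>" and "j \<le> t" and "t \<le> m" and "1 < (\<Sum>i<j. \<rho> ^ Suc i)"
    and step: "\<And>s. t - j \<le> s \<Longrightarrow> s < t \<Longrightarrow> \<rho> * real (m - s) \<le> real (Suc s)"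
  shows "m choose t < (\<Sum>l<t. m choose l)"
proof -
  have "real (m choose t) < (\<Sum>i<j. \<rho> ^ Suc i) * real (m choose t)"
    using assms(3,4) by simp
  also have "\<dots> = (\<Sum>i<j. \<rho> ^ Suc i * real (m choose t))"
    by (simp add: sum_distrib_right)
  also have "\<dots> \<le> (\<Sum>i<j. real (m choose (t - Suc i)))"
    using assms(2) by (intro sum_mono choose_geometric_lower_bound[OF assms(1)] step) auto
  also have "\<dots> = (\<Sum>l\<in>(\<lambda>i. t - Suc i) ` {..<j}. real (m choose l))"
    using assms(2) by (subst sum.reindex) (auto simp: inj_on_def)
  also have "\<dots> \<le> (\<Sum>l<t. real (m choose l))"
    by (rule sum_mono2) (use assms(2) in auto)
  finally show ?thesis
    by (simp flip: of_nat_sum)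
qed

lemma eventually_choose_less_sum_choose_below:
  fixes \<beta> :: real
  assumes "\<beta> < 2"
  shows "\<exists>T. \<forall>t m. T < t \<and> t \<le> m \<and> real (m - t) \<le> \<beta> * real t \<longrightarrow>
           m choose t < (\<Sum>l<t. m choose l)"
proof -
  obtain \<rho> :: real where \<rho>: "1/2 < \<rho>" "\<rho> < 1" "\<rho> * \<beta> < 1"
  proof (cases "\<beta> \<le> 1")
    case True
    then show ?thesis by (intro that[of "3/4"]) auto
  next
    case False
    then show ?thesis
      using assms by (intro that[of "(1/2 + 1/\<beta>) / 2"]) (auto simp: field_simps)
  qed
  have "(\<lambda>i. \<rho> * \<rho> ^ i) sums (\<rho> * (1 / (1 - \<rho>)))"
    by (rule sums_mult, rule geometric_sums) (use \<rho> in auto)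
  then have "(\<lambda>i. \<rho> ^ Suc i) sums (\<rho> / (1 - \<rho>))"
    by simp
  then have "(\<lambda>j. \<Sum>i<j. \<rho> ^ Suc i) \<longlonglongrightarrow> \<rho> / (1 - \<rho>)"
    by (simp only: sums_def)
  moreover have "1 < \<rho> / (1 - \<rho>)"
    using \<rho> by (simp add: field_simps)
  ultimately obtain j where j: "1 < (\<Sum>i<j. \<rho> ^ Suc i)"
    by (metis (lifting) eventually_sequentially order_refl order_tendstoD(1))
  define \<delta> where "\<delta> = 1 - \<rho> * \<beta>"
  have "0 < \<delta>" using \<rho> by (simp add: \<delta>_def)
  define T where "T = nat \<lceil>real j * (1 + \<rho>) / \<delta>\<rceil>"
  have T: "real j * (1 + \<rho>) / \<delta> \<le> real T" unfolding T_def by (rule real_nat_ceiling_ge)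
  show ?thesis
  proof (intro exI[of _ "T + j"] allI impI)
    fix t m :: nat
    assume tm: "T + j < t \<and> t \<le> m \<and> real (m - t) \<le> \<beta> * real t"
    then have "j \<le> t" by simp
    have "real j * (1 + \<rho>) / \<delta> < real t" using T tm by linarith
    then have "real j * (1 + \<rho>) < \<delta> * real t"
      using \<open>0 < \<delta>\<close> by (simp add: pos_divide_less_eq mult.commute)
    have "\<rho> * real (m - s) \<le> real (Suc s)" if "t - j \<le> s" "s < t" for s
    proof -
      have "real (m - s) = real (m - t) + real (t - s)"
        using tm that by (simp add: of_nat_diff)
      also have "\<dots> \<le> \<beta> * real t + real j"
        using tm that by linarith
      finally have "\<rho> * real (m - s) \<le> \<rho> * (\<beta> * real t + real j)"
        using \<rho> by (intro mult_left_mono) auto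
      also have "\<dots> \<le> real (Suc s)"
        using \<open>real j * (1 + \<rho>) < \<delta> * real t\<close> that by (simp add: \<delta>_def algebra_simps)
      finally show ?thesis .
    qed
    then show "m choose t < (\<Sum>l<t. m choose l)"
      using choose_less_sum_choose_below[OF _ \<open>j \<le> t\<close> _ j] \<rho> tm by auto
  qed
qed

lemma card_subsets_card_less:
  assumes "finite A"
  shows "card {D. D \<subseteq> A \<and> card D < r} = (\<Sum>l<r. card A choose l)"
proof (induction r)
  case 0
  then show ?case by simp
next
  case (Suc r)
  have "{D. D \<subseteq> A \<and> card D < Suc r} = {D. D \<subseteq> A \<and> card D < r} \<union> {D. D \<subseteq> A \<and> card D = r}"
    by auto
  moreover have "card ({D. D \<subseteq> A \<and> card D < r} \<union> {D. D \<subseteq> A \<and> card D = r}) =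
      card {D. D \<subseteq> A \<and> card D < r} + card {D. D \<subseteq> A \<and> card D = r}"
    by (rule card_Un_disjoint) (use assms in auto)
  ultimately show ?case
    using Suc.IH n_subsets[OF assms, of r] by simp
qed

definition hilton_milner :: "nat \<Rightarrow> nat \<Rightarrow> nat set set" where
  "hilton_milner n k = insert {2..k+1} {S \<in> k_subsets n k. 1 \<in> S \<and> S \<inter> {2..k+1} \<noteq> {}}"

lemma hilton_milner_subset: "k < n \<Longrightarrow> hilton_milner n k \<subseteq> k_subsets n k"
  by (auto simp: hilton_milner_def k_subsets_def)

lemma intersecting_hilton_milner: "0 < k \<Longrightarrow> intersecting (hilton_milner n k)"
  by (auto simp: intersecting_def hilton_milner_def)

lemma hilton_milnerI:
  assumes "S \<subseteq> {1..n}" "card S = k" "1 \<in> S" "y \<in> S" "y \<in> {2..k+1}"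
  shows "S \<in> hilton_milner n k"
  using assms by (auto simp: hilton_milner_def k_subsets_def)

lemma diff_familyI: "F \<in> \<F> \<Longrightarrow> F' \<in> \<F> \<Longrightarrow> F - F' \<in> diff_family \<F>"
  by (auto simp: diff_family_def)

text \<open>\<open>D\<close> is realised as \<open>F - F'\<close> with \<open>F = insert 1 (D \<union> P)\<close> and \<open>F' = insert 1 (insert x R)\<close>.\<close>

lemma diff_family_hilton_milnerI:
  assumes "2 \<le> k" "k < n" and D: "D \<subseteq> {2..n}" and x: "x \<in> {2..k+1}" "x \<notin> D"
    and R: "R \<subseteq> {2..n} - D - {x}" "card R = k - 2"
    and P: "P \<subseteq> insert x R" "card D + card P = k - 1" "(D \<union> P) \<inter> {2..k+1} \<noteq> {}"
  shows "D \<in> diff_family (hilton_milner n k)"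
proof -
  define F where "F = insert 1 (D \<union> P)"
  define F' where "F' = insert 1 (insert x R)"
  have "x \<in> {2..n}" using x(1) assms(2) by simp
  then have xR: "insert x R \<subseteq> {2..n}" using R(1) by blast
  then have "P \<subseteq> {2..n}" using P(1) by blast
  have one: "insert 1 {2..n} \<subseteq> {1..n}" "1 \<notin> {2..n}" using assms(2) by auto
  have "finite D" using D by (rule finite_subset) simp
  have "finite (insert x R)" using xR by (rule finite_subset) simp
  then have "finite R" "finite P" using P(1) finite_subset by auto
  have "D \<inter> P = {}" "1 \<notin> D \<union> P" using x(2) R(1) P(1) D \<open>P \<subseteq> {2..n}\<close> one(2) by blast+
  then have "card F = k"
    using \<open>finite D\<close> \<open>finite P\<close> P(2) assms(1) by (simp add: F_def card_Un_disjoint)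
  moreover have "F \<subseteq> {1..n}" using D \<open>P \<subseteq> {2..n}\<close> one(1) unfolding F_def by blast
  moreover obtain y where "y \<in> D \<union> P" "y \<in> {2..k+1}" using P(3) by blast
  ultimately have "F \<in> hilton_milner n k" by (intro hilton_milnerI[of F n k y]) (auto simp: F_def)
  have "x \<notin> R" "1 \<notin> insert x R" using R(1) xR one(2) by blast+
  then have "card F' = k" using \<open>finite R\<close> R(2) assms(1) by (simp add: F'_def)
  moreover have "F' \<subseteq> {1..n}" using xR one(1) unfolding F'_def by blast
  ultimately have "F' \<in> hilton_milner n k" using x(1) by (intro hilton_milnerI[of F' n k x]) (auto simp: F'_def)
  moreover have "F - F' = D" using \<open>1 \<notin> D \<union> P\<close> x(2) R(1) P(1) unfolding F_def F'_def by blast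
  ultimately show ?thesis using \<open>F \<in> hilton_milner n k\<close> by (metis diff_familyI)
qed

lemma subset_in_diff_family_hilton_milner:
  assumes "2 \<le> k" "2 * k \<le> n" and D: "D \<subseteq> {2..n}" "card D < k"
    and "\<not> (D \<subseteq> {k+2..n} \<and> card D = k - 1)"
  shows "D \<in> diff_family (hilton_milner n k)"
proof -
  have "k < n" using assms(1,2) by simp
  have "finite D" using D(1) by (rule finite_subset) simp
  have "\<not> {2..k+1} \<subseteq> D" using card_mono[OF \<open>finite D\<close>, of "{2..k+1}"] D(2) by auto
  then obtain x where x: "x \<in> {2..k+1}" "x \<notin> D" by blast
  have "x \<in> {2..n}" using x(1) assms(2) by simp
  then have "card ({2..n} - D - {x}) = n - 1 - card D - 1"
    using x(2) D(1) \<open>finite D\<close> by (simp add: card_Diff_subset card_Diff_singleton)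
  then have "k - 2 \<le> card ({2..n} - D - {x})" using D(2) assms(2) by arith
  then obtain R where R: "R \<subseteq> {2..n} - D - {x}" "card R = k - 2"
    by (meson obtain_subset_with_card_n)
  show ?thesis
  proof (cases "card D + 1 < k")
    case True
    have "k - 2 - card D \<le> card R" using R(2) by simp
    then obtain P where P: "P \<subseteq> R" "card P = k - 2 - card D"
      by (meson obtain_subset_with_card_n)
    have "finite R" using R(1) by (rule finite_subset) simp
    then have "finite P" using P(1) finite_subset by blast
    moreover have "x \<notin> P" using P(1) R(1) by blast
    ultimately have "card D + card (insert x P) = k - 1" using P(2) True by simp
    moreover have "insert x P \<subseteq> insert x R" using P(1) by blast
    moreover have "(D \<union> insert x P) \<inter> {2..k+1} \<noteq> {}" using x(1) by blast
    ultimately show ?thesis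
      using diff_family_hilton_milnerI[OF assms(1) \<open>k < n\<close> D(1) x R] by blast
  next
    case False
    then have "card D + card {} = k - 1" using D(2) by simp
    then have "\<not> D \<subseteq> {k+2..n}" using assms(5) by simp
    then obtain y where "y \<in> D" "y \<notin> {k+2..n}" by blast
    moreover have "y \<in> {2..n}" using D(1) \<open>y \<in> D\<close> by blast
    ultimately have "(D \<union> {}) \<inter> {2..k+1} \<noteq> {}" by auto
    with \<open>card D + card {} = k - 1\<close> show ?thesis
      using diff_family_hilton_milnerI[OF assms(1) \<open>k < n\<close> D(1) x R] by blast
  qed
qed

lemma insert_one_in_diff_family_hilton_milner:
  assumes "k < n" and E: "E \<subseteq> {k+2..n}" "card E + 1 < k"
  shows "insert 1 E \<in> diff_family (hilton_milner n k)"
proof -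
  obtain Y where Y: "Y \<subseteq> {2..k+1}" "card Y = k - 1 - card E"
    using obtain_subset_with_card_n[of "k - 1 - card E" "{2..k+1}"] by auto
  then obtain y where "y \<in> Y" using E(2) by fastforce
  define F where "F = insert 1 (E \<union> Y)"
  have "finite E" using E(1) by (rule finite_subset) simp
  have "finite Y" using Y(1) by (rule finite_subset) simp
  have "{k+2..n} \<inter> {2..k+1} = {}" by auto
  then have "E \<inter> Y = {}" using E(1) Y(1) by blast
  have "1 \<notin> E \<union> Y" using E(1) Y(1) by auto
  have "card F = k" using \<open>finite E\<close> \<open>finite Y\<close> \<open>E \<inter> Y = {}\<close> \<open>1 \<notin> E \<union> Y\<close> E(2) Y(2)
    by (simp add: F_def card_Un_disjoint)
  moreover have "F \<subseteq> {1..n}" using E(1) Y(1) assms(1) by (auto simp: F_def)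
  ultimately have "F \<in> hilton_milner n k"
    using \<open>y \<in> Y\<close> Y(1) by (intro hilton_milnerI[of F n k y]) (auto simp: F_def)
  moreover have "{2..k+1} \<in> hilton_milner n k" by (simp add: hilton_milner_def)
  moreover have "F - {2..k+1} = insert 1 E" using E(1) Y(1) by (auto simp: F_def)
  ultimately show ?thesis by (metis diff_familyI)
qed

lemma card_diff_family_hilton_milner:
  assumes "2 \<le> k" "2 * k \<le> n"
  shows "(\<Sum>l<k. (n - 1) choose l) + (\<Sum>l<k - 1. (n - k - 1) choose l)
           \<le> card (diff_family (hilton_milner n k)) + ((n - k - 1) choose (k - 1))"
proof -
  define X where "X = {D. D \<subseteq> {2..n} \<and> card D < k}"
  define L where "L = {D. D \<subseteq> {k+2..n} \<and> card D = k - 1}"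
  define B where "B = {E. E \<subseteq> {k+2..n} \<and> card E < k - 1}"
  have "D \<in> diff_family (hilton_milner n k)" if "D \<in> X - L" for D
    using that assms by (intro subset_in_diff_family_hilton_milner) (auto simp: X_def L_def)
  moreover have "insert 1 E \<in> diff_family (hilton_milner n k)" if "E \<in> B" for E
    using that assms by (intro insert_one_in_diff_family_hilton_milner) (auto simp: B_def)
  ultimately have "(X - L) \<union> insert 1 ` B \<subseteq> diff_family (hilton_milner n k)" by blast
  moreover have "finite (diff_family (hilton_milner n k))"
    by (rule finite_subset[of _ "Pow {1..n}"])
      (use hilton_milner_subset[of k n] assms in \<open>auto simp: diff_family_def k_subsets_def\<close>)
  ultimately have "card ((X - L) \<union> insert 1 ` B) \<le> card (diff_family (hilton_milner n k))"
    by (simp add: card_mono)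
  moreover have "card ((X - L) \<union> insert 1 ` B) = card (X - L) + card B"
  proof -
    have "1 \<notin> {k+2..n}" by simp
    then have "inj_on (insert 1) (Pow {k+2..n})"
      unfolding inj_on_def by (meson PowD insert_ident subsetD)
    then have "card (insert 1 ` B) = card B"
      by (rule card_image[OF inj_on_subset]) (auto simp: B_def)
    moreover have "(X - L) \<inter> insert 1 ` B = {}" by (auto simp: X_def)
    moreover have "finite X" "finite B" by (simp_all add: X_def B_def)
    ultimately show ?thesis by (simp add: card_Un_disjoint)
  qed
  moreover have "card X - card L \<le> card (X - L)"
    by (rule diff_card_le_card_Diff) (simp add: L_def)
  moreover have "card X = (\<Sum>l<k. (n - 1) choose l)" "card B = (\<Sum>l<k - 1. (n - k - 1) choose l)"
    by (simp_all add: X_def B_def card_subsets_card_less)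
  moreover have "card L = (n - k - 1) choose (k - 1)"
    by (simp add: L_def n_subsets)
  ultimately show ?thesis by linarith
qed

theorem mainTheorem2:
  fixes c :: real
  assumes "2 < c" and "c < 4"
  shows "\<exists>K::nat. \<forall>k n :: nat. K < k \<and> real n = c * real k \<longrightarrow>
           (\<exists>\<F>. \<F> \<subseteq> k_subsets n k \<and> intersecting \<F> \<and>
              card (diff_family \<F>) > (\<Sum>l<k. (n - 1) choose l))"
proof -
  \<comment> \<open>\<open>c - 2 < c/2 < 2\<close>, and \<open>(c - 2) k \<le> (c/2) (k - 1)\<close> as soon as \<open>c/(4 - c) \<le> k\<close>.\<close>
  obtain T where T: "\<forall>t m. T < t \<and> t \<le> m \<and> real (m - t) \<le> c / 2 * real t \<longrightarrow>
      m choose t < (\<Sum>l<t. m choose l)"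
    using eventually_choose_less_sum_choose_below[of "c / 2"] assms(2) by auto
  show ?thesis
  proof (intro exI[of _ "T + nat \<lceil>c / (4 - c)\<rceil> + 2"] allI impI)
    fix k n :: nat
    assume kn: "T + nat \<lceil>c / (4 - c)\<rceil> + 2 < k \<and> real n = c * real k"
    then have k: "T + 2 < k" and n: "real n = c * real k" by auto
    have "c / (4 - c) < real k" using kn real_nat_ceiling_ge[of "c / (4 - c)"] by linarith
    then have "c < (4 - c) * real k" using assms(2) by (simp add: pos_divide_less_eq mult.commute)
    have "2 * real k < c * real k" using assms(1) k by (intro mult_strict_right_mono) auto
    then have "2 * k < n" using n by (simp flip: of_nat_less_iff)
    have "real (n - k - 1 - (k - 1)) = (c - 2) * real k"
      using \<open>2 * k < n\<close> n k by (simp add: of_nat_diff algebra_simps)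
    also have "\<dots> \<le> c / 2 * real (k - 1)"
      using k \<open>c < (4 - c) * real k\<close> by (simp add: of_nat_diff field_simps)
    finally have "real (n - k - 1 - (k - 1)) \<le> c / 2 * real (k - 1)" .
    moreover have "T < k - 1" "k - 1 \<le> n - k - 1" using k \<open>2 * k < n\<close> by auto
    ultimately have "(n - k - 1) choose (k - 1) < (\<Sum>l<k - 1. (n - k - 1) choose l)"
      using T by blast
    then show "\<exists>\<F>. \<F> \<subseteq> k_subsets n k \<and> intersecting \<F> \<and>
        card (diff_family \<F>) > (\<Sum>l<k. (n - 1) choose l)"
      using card_diff_family_hilton_milner[of k n] hilton_milner_subset[of k n]
        intersecting_hilton_milner[of k n] k \<open>2 * k < n\<close>
      by (intro exI[of _ "hilton_milner n k"]) auto
  qed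
qed

end
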